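(* Let $j$ be an integer, $a=2^j$, $b=2^{j+1}$, let $n>1$ be an integer, and let $s_1,\dots,s_n$ and $w_1,\dots,w_n$ be the nodes and weights of the $n$-point Gauss–Legendre quadrature on $[a,b]$. Then for every $\alpha\in(0,1)$ and every $t>0$, $$\left|\int_a^b e^{-ts}s^{\alpha-1}\,ds-\sum_{k=1}^n w_k s_k^{\alpha-1}e^{-s_k t}\right|<2\sqrt{2}\,\pi\, a^{\alpha}\left(\frac{e^{1/e}}{4}\right)^{2n}.$$
   Context: The $n$-point Gauss–Legendre quadrature on $[a,b]$ is the rule $\int_a^b\varphi(s)\,ds\approx\sum_{k=1}^n w_k\varphi(s_k)$ with nodes at the zeros of the degree-$n$ Legendre polynomial mapped to $[a,b]$, exact for all polynomials of degree at most $2n-1$. *)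

theory Defs
  imports "HOL-Analysis.Analysis" "HOL-Computational_Algebra.Polynomial"
begin

fun legendre :: "nat \<Rightarrow> real poly" where
  "legendre 0 = 1"
| "legendre (Suc 0) = [:0, 1:]"
| "legendre (Suc (Suc m)) =
     smult (1 / (real m + 2))
       (smult (2 * real m + 3) ([:0, 1:] * legendre (Suc m)) - smult (real m + 1) (legendre m))"

definition gauss_legendre ::
    "real \<Rightarrow> real \<Rightarrow> nat \<Rightarrow> (nat \<Rightarrow> real) \<Rightarrow> (nat \<Rightarrow> real) \<Rightarrow> bool" where
  "gauss_legendre a b n s w \<longleftrightarrow>
     inj_on s {1..n} \<and>
     (\<forall>k\<in>{1..n}. s k \<in> {a..b} \<and>
        poly (legendre n) ((2 * s k - a - b) / (b - a)) = 0) \<and>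
     (\<forall>p :: real poly. degree p \<le> 2 * n - 1 \<longrightarrow>
        integral {a..b} (poly p) = (\<Sum>k=1..n. w k * poly p (s k)))"

end

theory Submission
  imports Defs
begin

text \<open>
  Let \<open>A = 2 powr j\<close>, \<open>m = 2n\<close> and \<open>f x = exp (- t * x) * x powr (\<alpha> - 1)\<close>. Interpolating
  \<open>f\<close> at the \<open>m\<close> Chebyshev nodes of \<open>[A, 2A]\<close> and applying Rolle's theorem \<open>m\<close> times
  bounds the error by \<open>sup |f^(m)| (A/2)^m / (2^(m-1) m!)\<close>, since the nodal polynomial is a
  rescaled Chebyshev polynomial and hence bounded by 1. Leibniz' rule gives
  \<open>|f^(m)(y)| \<le> m! y^(\<alpha>-1-m)\<close>: the binomial sum collapses to \<open>m! y^(\<alpha>-1-m) exp(-ty)\<close> times a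
  partial sum of \<open>exp(ty)\<close>. So \<open>f\<close> is within \<open>2 A^(\<alpha>-1) / 4^m\<close> of a polynomial of degree
  \<open>< m\<close>. The Gauss-Legendre rule integrates that polynomial exactly and has nonnegative weights
  summing to \<open>A\<close>, so its error for \<open>f\<close> is at most \<open>4 A^\<alpha> / 4^m\<close>, below the stated bound.
\<close>

lemma Rolle_iterated:
  fixes G :: "nat \<Rightarrow> real \<Rightarrow> real" and z :: "nat \<Rightarrow> real"
  assumes "\<And>k y. k < m \<Longrightarrow> y \<in> {a..b} \<Longrightarrow> (G k has_real_derivative G (Suc k) y) (at y)"
    and "\<And>i. i < m \<Longrightarrow> z i < z (Suc i)"
    and "\<And>i. i \<le> m \<Longrightarrow> z i \<in> {a..b}"
    and "\<And>i. i \<le> m \<Longrightarrow> G 0 (z i) = 0"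
  shows "\<exists>\<xi>\<in>{a..b}. G m \<xi> = 0"
  using assms
proof (induction m arbitrary: G z)
  case 0
  then show ?case by force
next
  case (Suc m)
  have "\<exists>y. z i < y \<and> y < z (Suc i) \<and> G 1 y = 0" if i: "i < Suc m" for i
  proof -
    have D: "(G 0 has_real_derivative G 1 y) (at y)" if "y \<in> {z i..z (Suc i)}" for y
      using Suc.prems(1)[of 0] Suc.prems(3)[of i] Suc.prems(3)[of "Suc i"] i that by auto
    have "\<exists>y. z i < y \<and> y < z (Suc i) \<and> DERIV (G 0) y :> 0"
    proof (rule Rolle)
      show "z i < z (Suc i)" using Suc.prems(2) i .
      show "G 0 (z i) = G 0 (z (Suc i))" using Suc.prems(4) i by simp
      show "continuous_on {z i..z (Suc i)} (G 0)"
        using D by (meson DERIV_isCont continuous_at_imp_continuous_on)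
      show "G 0 differentiable (at y)" if "z i < y" "y < z (Suc i)" for y
        using D[of y] that real_differentiable_def by force
    qed
    then obtain y where y: "z i < y" "y < z (Suc i)" "DERIV (G 0) y :> 0" by blast
    then have "G 1 y = 0" using D[of y] DERIV_unique by force
    then show ?thesis using y by blast
  qed
  then obtain z' where z': "\<And>i. i < Suc m \<Longrightarrow> z i < z' i \<and> z' i < z (Suc i) \<and> G 1 (z' i) = 0"
    by metis
  show ?case
  proof (rule Suc.IH[of "\<lambda>k. G (Suc k)" z'])
    show "z' i \<in> {a..b}" if "i \<le> m" for i
      using z'[of i] that Suc.prems(3)[of i] Suc.prems(3)[of "Suc i"] by force
    show "z' i < z' (Suc i)" if "i < m" for i
      using z'[of i] z'[of "Suc i"] that by force
  qed (use Suc.prems(1) z' in auto)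
qed

lemma Rolle_iterated_finite:
  fixes G :: "nat \<Rightarrow> real \<Rightarrow> real"
  assumes "\<And>k y. k < m \<Longrightarrow> y \<in> {a..b} \<Longrightarrow> (G k has_real_derivative G (Suc k) y) (at y)"
    and "finite Z" "card Z = Suc m" "Z \<subseteq> {a..b}" "\<And>z. z \<in> Z \<Longrightarrow> G 0 z = 0"
  shows "\<exists>\<xi>\<in>{a..b}. G m \<xi> = 0"
proof -
  define xs where "xs = sorted_list_of_set Z"
  have len: "length xs = Suc m" and sorted: "sorted_wrt (<) xs" and set: "set xs = Z"
    using assms(2,3) by (simp_all add: xs_def)
  show ?thesis
  proof (rule Rolle_iterated[where z = "(!) xs" and G = G and m = m, OF assms(1)])
    show "xs ! i < xs ! Suc i" if "i < m" for i
      using sorted len that by (simp add: sorted_wrt_nth_less)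
    show "xs ! i \<in> {a..b}" if "i \<le> m" for i
      using len that set assms(4) nth_mem by fastforce
    show "G 0 (xs ! i) = 0" if "i \<le> m" for i
      using len that set assms(5) nth_mem by fastforce
  qed
qed

definition lagrange_basis :: "'a set \<Rightarrow> 'a \<Rightarrow> 'a :: field poly" where
  "lagrange_basis X x = (\<Prod>y\<in>X - {x}. [:- y, 1:])"

lemma poly_lagrange_basis: "poly (lagrange_basis X x) z = (\<Prod>y\<in>X - {x}. z - y)"
  by (simp add: lagrange_basis_def poly_prod)

lemma degree_lagrange_basis:
  assumes "finite X" "x \<in> X"
  shows "degree (lagrange_basis X x) = card X - 1"
  using assms by (simp add: lagrange_basis_def degree_prod_eq_sum_degree)

lemma poly_lagrange_basis_eq_0:
  "finite X \<Longrightarrow> z \<in> X \<Longrightarrow> z \<noteq> x \<Longrightarrow> poly (lagrange_basis X x) z = 0"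
  unfolding poly_lagrange_basis by (rule prod_zero) auto

lemma poly_lagrange_basis_self_neq_0:
  "finite X \<Longrightarrow> poly (lagrange_basis X x) x \<noteq> 0"
  unfolding poly_lagrange_basis by simp

lemma lagrange_interpolation:
  fixes f :: "'a \<Rightarrow> 'a :: field"
  assumes "finite X" "X \<noteq> {}"
  obtains P where "degree P < card X" "\<And>x. x \<in> X \<Longrightarrow> poly P x = f x"
proof
  define P where
    "P = (\<Sum>x\<in>X. smult (f x / poly (lagrange_basis X x) x) (lagrange_basis X x))"
  show "degree P < card X"
    unfolding P_def using assms
    by (intro degree_sum_less) (auto simp: degree_lagrange_basis card_gt_0_iff
        intro!: le_less_trans[OF degree_smult_le])
  show "poly P x = f x" if "x \<in> X" for x
  proof -
    have "poly P x = f x / poly (lagrange_basis X x) x * poly (lagrange_basis X x) x"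
      unfolding P_def poly_sum using poly_lagrange_basis_eq_0[OF assms(1) that]
      by (subst sum.remove[OF assms(1) that]) (auto intro!: sum.neutral simp: eq_commute[of x])
    then show ?thesis using poly_lagrange_basis_self_neq_0[OF assms(1)] by simp
  qed
qed

lemma higher_pderiv_degree_le:
  assumes "degree p \<le> m"
  shows "(pderiv ^^ m) p = [:fact m * coeff p m:]"
proof (rule poly_eqI)
  fix n
  show "coeff ((pderiv ^^ m) p) n = coeff [:fact m * coeff p m:] n"
  proof (cases n)
    case (Suc n')
    then have "coeff p (n + m) = 0" using assms by (simp add: coeff_eq_0)
    then show ?thesis using Suc by (simp add: coeff_higher_pderiv)
  qed (simp add: coeff_higher_pderiv pochhammer_fact)
qed

text \<open>Cauchy's interpolation error formula; classically \<open>W\<close> is the nodal polynomial.\<close>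
lemma interpolation_error_Rolle:
  fixes F :: "nat \<Rightarrow> real \<Rightarrow> real" and P W :: "real poly"
  assumes deriv: "\<And>k y. k < m \<Longrightarrow> y \<in> {a..b} \<Longrightarrow> (F k has_real_derivative F (Suc k) y) (at y)"
    and X: "finite X" "card X = m" "X \<subseteq> {a..b}"
    and P: "degree P < m" "\<And>z. z \<in> X \<Longrightarrow> poly P z = F 0 z"
    and W: "\<And>z. poly W z = 0 \<longleftrightarrow> z \<in> X"
    and x: "x \<in> {a..b}"
  shows "\<exists>\<xi>\<in>{a..b}. (F 0 x - poly P x) * poly ((pderiv ^^ m) W) \<xi> = F m \<xi> * poly W x"
proof (cases "x \<in> X")
  case True
  then show ?thesis using x P(2) W by auto
next
  case False
  define K where "K = (F 0 x - poly P x) / poly W x"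
  define G where "G k y = F k y - poly ((pderiv ^^ k) P) y - K * poly ((pderiv ^^ k) W) y" for k y
  have "\<exists>\<xi>\<in>{a..b}. G m \<xi> = 0"
  proof (rule Rolle_iterated_finite[where Z = "insert x X"])
    show "(G k has_real_derivative G (Suc k) y) (at y)" if "k < m" "y \<in> {a..b}" for k y
      unfolding G_def using deriv[OF that]
      by (auto intro!: derivative_eq_intros simp: poly_DERIV[THEN DERIV_cong])
    show "G 0 z = 0" if "z \<in> insert x X" for z
      using that False W P(2) by (auto simp: G_def K_def)
  qed (use X x False in auto)
  then obtain \<xi> where \<xi>: "\<xi> \<in> {a..b}" "G m \<xi> = 0" by blast
  have "(pderiv ^^ m) P = 0"
    using higher_pderiv_degree_le[of P m] P(1) by (simp add: coeff_eq_0)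
  moreover have "poly W x \<noteq> 0" using W False by blast
  ultimately have "(F 0 x - poly P x) * poly ((pderiv ^^ m) W) \<xi> = F m \<xi> * poly W x"
    using \<xi>(2) by (simp add: G_def K_def field_simps)
  then show ?thesis using \<xi>(1) by blast
qed

fun chebyshev_poly :: "nat \<Rightarrow> real poly" where
  "chebyshev_poly 0 = 1"
| "chebyshev_poly (Suc 0) = [:0, 1:]"
| "chebyshev_poly (Suc (Suc k)) = smult 2 ([:0, 1:] * chebyshev_poly (Suc k)) - chebyshev_poly k"

lemma poly_chebyshev_poly_cos: "poly (chebyshev_poly k) (cos \<theta>) = cos (real k * \<theta>)"
proof (induction k rule: chebyshev_poly.induct)
  case (3 k)
  have "cos (real (Suc (Suc k)) * \<theta>) + cos (real k * \<theta>) = 2 * cos \<theta> * cos (real (Suc k) * \<theta>)"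
    using cos_add[of "real (Suc k) * \<theta>" \<theta>] cos_diff[of "real (Suc k) * \<theta>" \<theta>]
    by (simp add: algebra_simps)
  then show ?case using 3 by (simp add: algebra_simps)
qed auto

lemma degree_coeff_chebyshev_poly:
  "degree (chebyshev_poly k) \<le> k \<and> coeff (chebyshev_poly k) k = (if k = 0 then 1 else 2 ^ (k - 1))"
proof (induction k rule: chebyshev_poly.induct)
  case (3 k)
  have "degree (smult 2 ([:0, 1:] * chebyshev_poly (Suc k))) \<le> Suc (Suc k)"
    using 3(1) by (simp add: degree_mult_le)
  then have "degree (chebyshev_poly (Suc (Suc k))) \<le> Suc (Suc k)"
    using 3(2) by (simp add: degree_diff_le)
  moreover have "coeff (chebyshev_poly k) (Suc (Suc k)) = 0" using 3(2) by (simp add: coeff_eq_0)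
  ultimately show ?case using 3 by simp
qed auto

lemma degree_chebyshev_poly: "degree (chebyshev_poly k) = k"
proof (rule antisym)
  show "k \<le> degree (chebyshev_poly k)"
    using degree_coeff_chebyshev_poly[of k] by (intro le_degree) simp
qed (use degree_coeff_chebyshev_poly in blast)

lemma lead_coeff_chebyshev_poly: "lead_coeff (chebyshev_poly k) = (if k = 0 then 1 else 2 ^ (k - 1))"
  using degree_coeff_chebyshev_poly[of k] by (simp add: degree_chebyshev_poly)

lemma abs_poly_chebyshev_poly_le:
  assumes "\<bar>u\<bar> \<le> 1"
  shows "\<bar>poly (chebyshev_poly k) u\<bar> \<le> 1"
  using poly_chebyshev_poly_cos[of k "arccos u"] assms by (simp add: cos_arccos_abs)

definition chebyshev_node :: "nat \<Rightarrow> nat \<Rightarrow> real" where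
  "chebyshev_node m i = cos ((2 * real i + 1) * pi / (2 * real m))"

lemma poly_chebyshev_poly_node:
  assumes "i < m"
  shows "poly (chebyshev_poly m) (chebyshev_node m i) = 0"
proof -
  have "real m * ((2 * real i + 1) * pi / (2 * real m)) = real i * pi + pi / 2"
    using assms by (simp add: field_simps)
  then show ?thesis
    by (simp add: chebyshev_node_def poly_chebyshev_poly_cos cos_add)
qed

lemma inj_on_chebyshev_node: "inj_on (chebyshev_node m) {..<m}"
proof (rule inj_onI)
  define \<theta> where "\<theta> k = (2 * real k + 1) * pi / (2 * real m)" for k
  have \<theta>_ge: "0 \<le> \<theta> k" and \<theta>_le: "\<theta> k \<le> pi" if "k < m" for k
  proof -
    have "(2 * real k + 1) * pi \<le> (2 * real m) * pi" using that by (intro mult_right_mono) auto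
    then show "\<theta> k \<le> pi" using that by (simp add: \<theta>_def divide_le_eq)
  qed (simp add: \<theta>_def)
  fix i j assume "i \<in> {..<m}" "j \<in> {..<m}" and "chebyshev_node m i = chebyshev_node m j"
  then have "\<theta> i = \<theta> j"
    using \<theta>_ge \<theta>_le by (intro cos_inj_pi[of "\<theta> i" "\<theta> j"]) (simp_all add: chebyshev_node_def \<theta>_def)
  then show "i = j" using \<open>i \<in> {..<m}\<close> by (simp add: \<theta>_def)
qed

lemma poly_chebyshev_poly_eq_0_iff:
  "poly (chebyshev_poly m) u = 0 \<longleftrightarrow> u \<in> chebyshev_node m ` {..<m}"
proof
  assume root: "poly (chebyshev_poly m) u = 0"
  show "u \<in> chebyshev_node m ` {..<m}"
  proof (rule ccontr)
    assume u: "u \<notin> chebyshev_node m ` {..<m}"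
    have "lead_coeff (chebyshev_poly m) \<noteq> 0" by (simp add: lead_coeff_chebyshev_poly)
    then have nonzero: "chebyshev_poly m \<noteq> 0" by (metis coeff_0)
    have "insert u (chebyshev_node m ` {..<m}) \<subseteq> {x. poly (chebyshev_poly m) x = 0}"
      using root poly_chebyshev_poly_node by auto
    then have "card (insert u (chebyshev_node m ` {..<m})) \<le> card {x. poly (chebyshev_poly m) x = 0}"
      by (rule card_mono[OF poly_roots_finite[OF nonzero]])
    also have "\<dots> \<le> m"
      using card_poly_roots_bound[OF nonzero] by (simp add: degree_chebyshev_poly)
    finally show False
      using u inj_on_chebyshev_node by (simp add: card_image)
  qed
qed (auto simp: poly_chebyshev_poly_node)

lemma chebyshev_interpolation_error:
  fixes F :: "nat \<Rightarrow> real \<Rightarrow> real"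
  assumes deriv: "\<And>k y. k < m \<Longrightarrow> y \<in> {c - h..c + h} \<Longrightarrow> (F k has_real_derivative F (Suc k) y) (at y)"
    and bound: "\<And>y. y \<in> {c - h..c + h} \<Longrightarrow> \<bar>F m y\<bar> \<le> M"
    and "0 < h" "0 < m"
  obtains P where "degree P < m"
    "\<And>x. x \<in> {c - h..c + h} \<Longrightarrow> \<bar>F 0 x - poly P x\<bar> \<le> M * h ^ m / (2 ^ (m - 1) * fact m)"
proof -
  define X where "X = (\<lambda>i. c + h * chebyshev_node m i) ` {..<m}"
  define W where "W = pcompose (chebyshev_poly m) [:- c / h, 1 / h:]"
  have poly_W: "poly W z = poly (chebyshev_poly m) ((z - c) / h)" for z
    by (simp add: W_def poly_pcompose diff_divide_distrib)
  have "inj_on (\<lambda>i. c + h * chebyshev_node m i) {..<m}"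
    using inj_on_chebyshev_node[of m] \<open>0 < h\<close> by (simp add: inj_on_def)
  then have card_X: "card X = m" by (simp add: X_def card_image)
  have "finite X" "X \<noteq> {}" using card_X \<open>0 < m\<close> by (auto simp: X_def)
  have in_interval: "c + h * u \<in> {c - h..c + h}" if "\<bar>u\<bar> \<le> 1" for u
  proof -
    have "\<bar>h * u\<bar> \<le> h" using that \<open>0 < h\<close> by (simp add: abs_mult mult_left_le)
    then show ?thesis by (auto simp: abs_le_iff)
  qed
  have "X \<subseteq> {c - h..c + h}"
    unfolding X_def chebyshev_node_def using in_interval by auto
  have W_roots: "poly W z = 0 \<longleftrightarrow> z \<in> X" for z
    using \<open>0 < h\<close> by (auto simp: poly_W poly_chebyshev_poly_eq_0_iff X_def field_simps)
  have W_deriv: "poly ((pderiv ^^ m) W) y = fact m * 2 ^ (m - 1) / h ^ m" for y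
  proof -
    have "degree W = m" using \<open>0 < h\<close> by (simp add: W_def degree_pcompose degree_chebyshev_poly)
    moreover have "lead_coeff W = 2 ^ (m - 1) / h ^ m"
      using \<open>0 < h\<close> \<open>0 < m\<close>
      by (simp add: W_def lead_coeff_comp degree_chebyshev_poly power_one_over
          lead_coeff_chebyshev_poly[unfolded degree_chebyshev_poly])
    ultimately show ?thesis by (simp add: higher_pderiv_degree_le)
  qed
  obtain P where P: "degree P < m" "\<And>z. z \<in> X \<Longrightarrow> poly P z = F 0 z"
    using lagrange_interpolation[OF \<open>finite X\<close> \<open>X \<noteq> {}\<close>, of "F 0"] card_X by metis
  show ?thesis
  proof (rule that[OF P(1)])
    fix x assume x: "x \<in> {c - h..c + h}"
    obtain \<xi> where \<xi>: "\<xi> \<in> {c - h..c + h}"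
        "(F 0 x - poly P x) * (fact m * 2 ^ (m - 1) / h ^ m) = F m \<xi> * poly W x"
      using interpolation_error_Rolle[OF deriv \<open>finite X\<close> card_X \<open>X \<subseteq> _\<close> P W_roots x]
      unfolding W_deriv by blast
    have "\<bar>(x - c) / h\<bar> \<le> 1" using x \<open>0 < h\<close> by (auto simp: abs_le_iff field_simps)
    then have "\<bar>F m \<xi> * poly W x\<bar> \<le> M"
      using bound[OF \<xi>(1)] abs_poly_chebyshev_poly_le[of "(x - c) / h" m]
      by (simp add: poly_W abs_mult mult_le_one order_trans[OF mult_right_le_one_le] mult_mono)
    moreover have "\<bar>F 0 x - poly P x\<bar> * (fact m * 2 ^ (m - 1) / h ^ m) = \<bar>F m \<xi> * poly W x\<bar>"
      using arg_cong[OF \<xi>(2), of abs] \<open>0 < h\<close> by (simp add: abs_mult)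
    ultimately show "\<bar>F 0 x - poly P x\<bar> \<le> M * h ^ m / (2 ^ (m - 1) * fact m)"
      using \<open>0 < h\<close> by (simp add: field_simps)
  qed
qed

lemma binomial_sum_Suc:
  fixes u v :: "nat \<Rightarrow> 'a :: comm_ring_1"
  shows "(\<Sum>i\<le>Suc k. of_nat (Suc k choose i) * (u i * v (Suc k - i))) =
    (\<Sum>i\<le>k. of_nat (k choose i) * (u (Suc i) * v (k - i))) +
    (\<Sum>i\<le>k. of_nat (k choose i) * (u i * v (Suc k - i)))"
proof -
  define h where "h i = of_nat (k choose i) * (u i * v (Suc k - i))" for i
  have "(\<Sum>i\<le>Suc k. of_nat (Suc k choose i) * (u i * v (Suc k - i))) =
     u 0 * v (Suc k) + (\<Sum>i\<le>k. of_nat (Suc k choose Suc i) * (u (Suc i) * v (k - i)))"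
    by (subst sum.atMost_Suc_shift) simp
  also have "\<dots> = u 0 * v (Suc k) + (\<Sum>i\<le>k. of_nat (k choose i) * (u (Suc i) * v (k - i)))
      + (\<Sum>i\<le>k. h (Suc i))"
    by (simp add: h_def sum.distrib algebra_simps)
  also have "(\<Sum>i\<le>k. h (Suc i)) = (\<Sum>i\<le>Suc k. h i) - h 0"
    using sum.atMost_Suc_shift[of h k] by simp
  also have "(\<Sum>i\<le>Suc k. h i) = (\<Sum>i\<le>k. h i)" by (simp add: h_def binomial_eq_0)
  finally show ?thesis by (simp add: h_def)
qed

lemma has_field_derivative_Leibniz:
  fixes U V :: "nat \<Rightarrow> 'a :: real_normed_field \<Rightarrow> 'a"
  assumes "\<And>k. (U k has_field_derivative U (Suc k) x) (at x)"
      "\<And>k. (V k has_field_derivative V (Suc k) x) (at x)"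
  shows "((\<lambda>x. \<Sum>i\<le>k. of_nat (k choose i) * (U i x * V (k - i) x)) has_field_derivative
          (\<Sum>i\<le>Suc k. of_nat (Suc k choose i) * (U i x * V (Suc k - i) x))) (at x)"
proof -
  have "((\<lambda>x. \<Sum>i\<le>k. of_nat (k choose i) * (U i x * V (k - i) x)) has_field_derivative
      (\<Sum>i\<le>k. of_nat (k choose i) * (U i x * V (Suc (k - i)) x + U (Suc i) x * V (k - i) x))) (at x)"
    by (intro DERIV_sum DERIV_cmult DERIV_mult' assms)
  also have "(\<Sum>i\<le>k. of_nat (k choose i) * (U i x * V (Suc (k - i)) x + U (Suc i) x * V (k - i) x))
     = (\<Sum>i\<le>Suc k. of_nat (Suc k choose i) * (U i x * V (Suc k - i) x))"
    using binomial_sum_Suc[where u = "\<lambda>i. U i x" and v = "\<lambda>i. V i x" and k = k]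
    by (simp add: Suc_diff_le sum.distrib algebra_simps)
  finally show ?thesis .
qed

lemma exp_ge_partial_sum:
  assumes "0 \<le> (x::real)"
  shows "(\<Sum>l\<le>m. x ^ l / fact l) \<le> exp x"
proof -
  have "(\<Sum>l\<le>m. x ^ l / fact l) \<le> (\<Sum>l. x ^ l / fact l)"
    by (rule sum_le_suminf) (use summable_exp[of x] assms in \<open>simp_all add: field_simps\<close>)
  also have "\<dots> = exp x" by (simp add: exp_def field_simps)
  finally show ?thesis .
qed

definition powr_deriv :: "real \<Rightarrow> nat \<Rightarrow> real \<Rightarrow> real" where
  "powr_deriv r i y = (\<Prod>j<i. r - real j) * y powr (r - real i)"

definition exp_powr_deriv :: "real \<Rightarrow> real \<Rightarrow> nat \<Rightarrow> real \<Rightarrow> real" where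
  "exp_powr_deriv t r k y =
     (\<Sum>i\<le>k. real (k choose i) * (powr_deriv r i y * ((- t) ^ (k - i) * exp (- t * y))))"

lemma exp_powr_deriv_0: "exp_powr_deriv t r 0 y = exp (- t * y) * y powr r"
  by (simp add: exp_powr_deriv_def powr_deriv_def)

lemma has_real_derivative_powr_deriv:
  assumes "0 < y"
  shows "(powr_deriv r i has_real_derivative powr_deriv r (Suc i) y) (at y)"
proof -
  have "(powr_deriv r i has_real_derivative
      (\<Prod>j<i. r - real j) * ((r - real i) * y powr (r - real i - 1))) (at y)"
    unfolding powr_deriv_def by (intro DERIV_cmult has_real_derivative_powr assms)
  then show ?thesis
    by (simp add: powr_deriv_def prod.lessThan_Suc algebra_simps diff_diff_eq)
qed

lemma has_real_derivative_exp_powr_deriv: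
  assumes "0 < y"
  shows "(exp_powr_deriv t r k has_real_derivative exp_powr_deriv t r (Suc k) y) (at y)"
proof -
  have "((\<lambda>y. (- t) ^ l * exp (- t * y)) has_real_derivative (- t) ^ Suc l * exp (- t * y)) (at y)"
    for l by (auto intro!: derivative_eq_intros)
  then show ?thesis
    unfolding exp_powr_deriv_def
    using has_field_derivative_Leibniz[where U = "powr_deriv r" and V = "\<lambda>l y. (- t) ^ l * exp (- t * y)"]
      has_real_derivative_powr_deriv[OF assms]
    by simp
qed

lemma abs_powr_deriv_le:
  assumes "\<bar>r\<bar> \<le> 1" "0 < y"
  shows "\<bar>powr_deriv r i y\<bar> \<le> fact i * y powr (r - real i)"
proof -
  have "\<bar>\<Prod>j<i. r - real j\<bar> \<le> (\<Prod>j<i. real (Suc j))"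
    unfolding abs_prod by (rule prod_mono) (use assms in auto)
  also have "\<dots> = fact i" by (simp add: fact_prod_Suc atLeast0LessThan)
  finally show ?thesis
    unfolding powr_deriv_def abs_mult by (simp add: mult_right_mono)
qed

lemma abs_exp_powr_deriv_le:
  assumes "0 \<le> t" "\<bar>r\<bar> \<le> 1" "0 < y"
  shows "\<bar>exp_powr_deriv t r m y\<bar> \<le> fact m * y powr (r - real m)"
proof -
  define C where "C = fact m * y powr (r - real m) * exp (- t * y)"
  have term_le: "real (m choose i) * \<bar>powr_deriv r i y * ((- t) ^ (m - i) * exp (- t * y))\<bar>
      \<le> C * ((t * y) ^ (m - i) / fact (m - i))" if "i \<le> m" for i
  proof -
    have "y powr (r - real i) = y powr (r - real m) * y ^ (m - i)"
      using that assms(3) by (simp add: powr_realpow[symmetric] powr_add[symmetric] of_nat_diff)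
    then have "real (m choose i) * (fact i * y powr (r - real i) * (t ^ (m - i) * exp (- t * y)))
        = C * ((t * y) ^ (m - i) / fact (m - i))"
      using that by (simp add: C_def binomial_fact power_mult_distrib field_simps)
    moreover have "\<bar>powr_deriv r i y * ((- t) ^ (m - i) * exp (- t * y))\<bar>
        \<le> fact i * y powr (r - real i) * (t ^ (m - i) * exp (- t * y))"
      unfolding abs_mult using abs_powr_deriv_le[OF assms(2,3)] assms(1)
      by (simp add: power_abs mult_right_mono)
    ultimately show ?thesis by (metis mult_left_mono of_nat_0_le_iff)
  qed
  have "\<bar>exp_powr_deriv t r m y\<bar>
      \<le> (\<Sum>i\<le>m. real (m choose i) * \<bar>powr_deriv r i y * ((- t) ^ (m - i) * exp (- t * y))\<bar>)"
    unfolding exp_powr_deriv_def by (rule order_trans[OF sum_abs]) (simp add: abs_mult)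
  also have "\<dots> \<le> C * (\<Sum>i\<le>m. (t * y) ^ (m - i) / fact (m - i))"
    unfolding sum_distrib_left by (rule sum_mono, rule term_le) simp
  also have "(\<Sum>i\<le>m. (t * y) ^ (m - i) / fact (m - i)) = (\<Sum>l\<le>m. (t * y) ^ l / fact l)"
    using sum.atLeastAtMost_rev[of "\<lambda>l. (t * y) ^ l / fact l" 0 m] by (simp add: atLeast0AtMost)
  also have "C * \<dots> \<le> C * exp (t * y)"
    by (rule mult_left_mono[OF exp_ge_partial_sum]) (use assms in \<open>simp_all add: C_def\<close>)
  also have "\<dots> = fact m * y powr (r - real m)"
    by (simp add: C_def mult.assoc flip: exp_add)
  finally show ?thesis .
qed

lemma exp_powr_chebyshev_approx:
  fixes A t r :: real
  assumes "0 < A" "0 \<le> t" "- 1 \<le> r" "r \<le> 0" "0 < m"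
  obtains P where "degree P < m"
    "\<And>x. x \<in> {A..2 * A} \<Longrightarrow> \<bar>exp (- t * x) * x powr r - poly P x\<bar> \<le> 2 * A powr r / 4 ^ m"
proof -
  define M where "M = fact m * A powr (r - real m)"
  have interval: "{3 * A / 2 - A / 2..3 * A / 2 + A / 2} = {A..2 * A}" by simp
  have bound: "\<bar>exp_powr_deriv t r m y\<bar> \<le> M" if "y \<in> {A..2 * A}" for y
  proof -
    have "\<bar>exp_powr_deriv t r m y\<bar> \<le> fact m * y powr (r - real m)"
      using that assms by (intro abs_exp_powr_deriv_le) auto
    also have "\<dots> \<le> M"
      unfolding M_def using that assms by (intro mult_left_mono powr_mono2') auto
    finally show ?thesis .
  qed
  have deriv: "(exp_powr_deriv t r k has_real_derivative exp_powr_deriv t r (Suc k) y) (at y)"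
    if "y \<in> {A..2 * A}" for k y
    using that assms(1) by (intro has_real_derivative_exp_powr_deriv) auto
  obtain P where P: "degree P < m"
    "\<And>x. x \<in> {A..2 * A} \<Longrightarrow> \<bar>exp_powr_deriv t r 0 x - poly P x\<bar> \<le> M * (A / 2) ^ m / (2 ^ (m - 1) * fact m)"
    by (rule chebyshev_interpolation_error[of m "3 * A / 2" "A / 2" "exp_powr_deriv t r" M,
          unfolded interval]) (use deriv bound assms in auto)
  have "A powr (r - real m) * A ^ m = A powr r"
    using assms(1) by (simp add: powr_diff powr_realpow)
  moreover have "(4::real) ^ m = 2 ^ (m - 1) * 2 ^ m * 2"
    using assms(5) by (cases m) (simp_all flip: power_mult_distrib)
  ultimately have "M * (A / 2) ^ m / (2 ^ (m - 1) * fact m) = 2 * A powr r / 4 ^ m"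
    by (simp add: M_def power_divide field_simps)
  then show ?thesis using that P by (simp add: exp_powr_deriv_0)
qed

lemma gauss_legendre_weight_nonneg:
  assumes gl: "gauss_legendre a b n s w" and k: "k \<in> {1..n}"
  shows "0 \<le> w k"
proof -
  define X where "X = s ` {1..n}"
  define p where "p = lagrange_basis X (s k) ^ 2"
  have inj: "inj_on s {1..n}"
    and exact: "\<And>p. degree p \<le> 2 * n - 1 \<Longrightarrow> integral {a..b} (poly p) = (\<Sum>j=1..n. w j * poly p (s j))"
    using gl by (auto simp: gauss_legendre_def)
  have vanish: "poly p (s j) = 0" if "j \<in> {1..n}" "j \<noteq> k" for j
    using that k inj poly_lagrange_basis_eq_0[of X "s j" "s k"]
    by (simp add: p_def X_def inj_on_eq_iff)
  have "degree p \<le> 2 * (card X - 1)"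
    unfolding p_def using degree_power_le[of "lagrange_basis X (s k)" 2] k
    by (simp add: X_def degree_lagrange_basis)
  also have "\<dots> \<le> 2 * n - 1" using inj by (simp add: X_def card_image)
  finally have exact_p: "integral {a..b} (poly p) = (\<Sum>j=1..n. w j * poly p (s j))" by (rule exact)
  have "0 \<le> integral {a..b} (poly p)"
    by (rule integral_nonneg) (auto simp: p_def intro!: integrable_continuous_interval continuous_intros)
  also have "\<dots> = w k * poly p (s k)"
    unfolding exact_p using k vanish by (subst sum.remove[of _ k]) (auto intro!: sum.neutral)
  finally have "0 \<le> w k * poly p (s k)" .
  moreover have "poly p (s k) > 0"
    using poly_lagrange_basis_self_neq_0[of X "s k"] by (simp add: p_def X_def)
  ultimately show ?thesis by (simp add: zero_le_mult_iff)
qed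

lemma gauss_legendre_sum_weights:
  assumes "gauss_legendre a b n s w" "a \<le> b"
  shows "(\<Sum>k=1..n. w k) = b - a"
proof -
  have "\<forall>p :: real poly. degree p \<le> 2 * n - 1 \<longrightarrow>
      integral {a..b} (poly p) = (\<Sum>k=1..n. w k * poly p (s k))"
    using assms(1) by (simp add: gauss_legendre_def)
  then have "integral {a..b} (poly 1) = (\<Sum>k=1..n. w k * poly 1 (s k))" by simp
  moreover have "poly 1 = (\<lambda>x::real. 1)" by auto
  ultimately show ?thesis using assms(2) by simp
qed

lemma gauss_legendre_error_le:
  assumes gl: "gauss_legendre a b n s w" and "a \<le> b"
    and f: "continuous_on {a..b} f"
    and P: "degree P \<le> 2 * n - 1" "\<And>x. x \<in> {a..b} \<Longrightarrow> \<bar>f x - poly P x\<bar> \<le> \<epsilon>"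
  shows "\<bar>integral {a..b} f - (\<Sum>k=1..n. w k * f (s k))\<bar> \<le> 2 * (b - a) * \<epsilon>"
proof -
  have nodes: "s k \<in> {a..b}" if "k \<in> {1..n}" for k
    using gl that by (simp add: gauss_legendre_def)
  have cont: "continuous_on {a..b} (\<lambda>x. f x - poly P x)" using f by (intro continuous_intros)
  have "integral {a..b} (poly P) = (\<Sum>k=1..n. w k * poly P (s k))"
    using gl P(1) by (simp add: gauss_legendre_def)
  moreover have "f integrable_on {a..b}" "poly P integrable_on {a..b}"
    using f by (auto intro!: integrable_continuous_interval continuous_intros)
  ultimately have "integral {a..b} f - (\<Sum>k=1..n. w k * f (s k)) =
      integral {a..b} (\<lambda>x. f x - poly P x) - (\<Sum>k=1..n. w k * (f (s k) - poly P (s k)))"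
    by (simp add: integral_diff sum_subtractf algebra_simps)
  also have "\<bar>\<dots>\<bar> \<le> \<bar>integral {a..b} (\<lambda>x. f x - poly P x)\<bar> + \<bar>\<Sum>k=1..n. w k * (f (s k) - poly P (s k))\<bar>"
    by (rule abs_triangle_ineq4)
  also have "\<bar>integral {a..b} (\<lambda>x. f x - poly P x)\<bar> \<le> \<epsilon> * (b - a)"
    using integral_bound[OF \<open>a \<le> b\<close> cont, of \<epsilon>] P(2) by simp
  also have "\<bar>\<Sum>k=1..n. w k * (f (s k) - poly P (s k))\<bar> \<le> (\<Sum>k=1..n. w k * \<epsilon>)"
    using gauss_legendre_weight_nonneg[OF gl] P(2)[OF nodes]
    by (intro order_trans[OF sum_abs] sum_mono) (simp add: abs_mult mult_left_mono)
  also have "(\<Sum>k=1..n. w k * \<epsilon>) = (b - a) * \<epsilon>"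
    using gauss_legendre_sum_weights[OF gl \<open>a \<le> b\<close>] by (simp flip: sum_distrib_right)
  finally show ?thesis by (simp add: algebra_simps)
qed

lemma four_div_four_power_lt:
  fixes x :: real
  assumes "0 < x"
  shows "4 * x / 4 ^ k < 2 * sqrt 2 * pi * x * (exp (1 / exp 1) / 4) ^ k"
proof -
  have "(1 / 4 :: real) ^ k \<le> (exp (1 / exp 1) / 4) ^ k"
    by (intro power_mono) auto
  then have le: "x / 4 ^ k \<le> x * (exp (1 / exp 1) / 4) ^ k"
    using assms mult_left_mono[of "(1 / 4) ^ k" "(exp (1 / exp 1) / 4) ^ k" x]
    by (simp add: power_one_over)
  have "2 * 1 * 3 < 2 * sqrt 2 * pi" using pi_gt3 by (rule mult_strict_mono[rotated]) auto
  then have "4 * (x / 4 ^ k) < 2 * sqrt 2 * pi * (x / 4 ^ k)"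
    using assms by (intro mult_strict_right_mono) auto
  also have "\<dots> \<le> 2 * sqrt 2 * pi * (x * (exp (1 / exp 1) / 4) ^ k)"
    using le by (intro mult_left_mono) auto
  finally show ?thesis by (simp add: mult.assoc)
qed

theorem lemma6:
  fixes j :: int and n :: nat and s w :: "nat \<Rightarrow> real" and \<alpha> t :: real
  assumes "n > 1"
    and "gauss_legendre (2 powr real_of_int j) (2 powr real_of_int (j + 1)) n s w"
    and "0 < \<alpha>" and "\<alpha> < 1" and "0 < t"
  shows "\<bar>integral {2 powr real_of_int j .. 2 powr real_of_int (j + 1)}
            (\<lambda>x. exp (- t * x) * x powr (\<alpha> - 1))
          - (\<Sum>k=1..n. w k * s k powr (\<alpha> - 1) * exp (- s k * t))\<bar>
         < 2 * sqrt 2 * pi * (2 powr real_of_int j) powr \<alpha> * (exp (1 / exp 1) / 4) ^ (2 * n)"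
proof -
  define A where "A = 2 powr real_of_int j"
  define f where "f = (\<lambda>x. exp (- t * x) * x powr (\<alpha> - 1))"
  have "0 < A" and upper: "2 powr real_of_int (j + 1) = 2 * A"
    by (simp_all add: A_def powr_add)
  have quadrature: "(\<Sum>k=1..n. w k * s k powr (\<alpha> - 1) * exp (- s k * t)) = (\<Sum>k=1..n. w k * f (s k))"
    by (simp add: f_def mult_ac)
  obtain P where "degree P < 2 * n"
      and P: "\<And>x. x \<in> {A..2 * A} \<Longrightarrow> \<bar>f x - poly P x\<bar> \<le> 2 * A powr (\<alpha> - 1) / 4 ^ (2 * n)"
    using exp_powr_chebyshev_approx[OF \<open>0 < A\<close>, of t "\<alpha> - 1" "2 * n"] assms unfolding f_def by auto
  have "continuous_on {A..2 * A} f"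
    using \<open>0 < A\<close> unfolding f_def by (intro continuous_intros) auto
  then have "\<bar>integral {A..2 * A} f - (\<Sum>k=1..n. w k * f (s k))\<bar>
      \<le> 2 * (2 * A - A) * (2 * A powr (\<alpha> - 1) / 4 ^ (2 * n))"
    using assms(2) \<open>degree P < 2 * n\<close> P \<open>0 < A\<close> unfolding A_def[symmetric] upper
    by (intro gauss_legendre_error_le) auto
  also have "\<dots> = 4 * A powr \<alpha> / 4 ^ (2 * n)"
    using \<open>0 < A\<close> by (simp add: powr_diff field_simps)
  also have "\<dots> < 2 * sqrt 2 * pi * A powr \<alpha> * (exp (1 / exp 1) / 4) ^ (2 * n)"
    using \<open>0 < A\<close> by (intro four_div_four_power_lt) simp
  finally show ?thesis
    unfolding A_def[symmetric] upper quadrature f_def[symmetric] .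
qed

end
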